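(* Let $\mathcal{A} = (V, V_0, V_1, E, v_I)$ be an arena, $w \colon E \to -\mathbb{N} \cup \{\mathrm{R}\}$, $cap \in \mathbb{N}$ and $t \in \mathbb{N}$. If Player~$0$ wins $(\mathcal{A}, \mathsf{AvgRecharge}(w, cap, t))$, then she also wins it with a finite-state strategy implemented by a memory structure with $cap+2$ memory states.
   Context: An arena $\mathcal{A} = (V, V_0, V_1, E, v_I)$ consists of a finite directed graph $(V,E)$ in which every vertex has at least one outgoing edge, a partition $V = V_0 \uplus V_1$, and an initial vertex $v_I$. A play is an infinite path $v_0 v_1 \cdots$ with $v_0 = v_I$. A strategy for Player~$i$ is a map $\sigma \colon V^* V_i \to V$ with $(v, \sigma(xv)) \in E$; a play is consistent with $\sigma$ if $v_{n+1} = \sigma(v_0\cdots v_n)$ whenever $v_n \in V_i$. Player~$0$ wins $(\mathcal{A}, \mathrm{Win})$ (with a strategy $\sigma$) if all plays consistent with $\sigma$ lie in $\mathrm{Win}$. A memory structure $\mathcal{M} = (M, m_I, \mathrm{Upd})$ has a finite set $M$ of states, initial state $m_I$, and update $\mathrm{Upd} \colon M \times E \to M$, extended by $\mathrm{Upd}^+(v_0) = m_I$, $\mathrm{Upd}^+(v_0\cdots v_n v_{n+1}) = \mathrm{Upd}(\mathrm{Upd}^+(v_0\cdots v_n),(v_n,v_{n+1}))$. A next-move function $\mathrm{Nxt} \colon V_i \times M \to V$ with $(v,\mathrm{Nxt}(v,m)) \in E$ induces the strategy $\sigma(v_0\cdots v_n) = \mathrm{Nxt}(v_n, \mathrm{Upd}^+(v_0\cdots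 v_n))$; such a strategy is finite-state, implemented by $\mathcal{M}$, and its size is $|M|$. A recharge weight function $w \colon E \to -\mathbb{N} \cup \{\mathrm{R}\}$ labels each edge with a non-positive integer or the recharge action $\mathrm{R}$. For a finite path $x$ without $\mathrm{R}$-edges, $\mathrm{EL}(x)$ is the sum of its edge weights. $\mathrm{EL}_{cap}(v_0\cdots v_n) = cap + \mathrm{EL}(x)$ where $x$ is the longest suffix of $v_0\cdots v_n$ containing no $\mathrm{R}$-edge. $\mathsf{Recharge}(w,cap) = \{v_0 v_1 \cdots \mid \forall n.\ \mathrm{EL}_{cap}(v_0\cdots v_n) \ge 0\}$ and $\mathsf{AvgRecharge}(w,cap,t) = \{ v_0 v_1\cdots \mid \limsup_{n\to\infty} \frac1n \sum_{i=0}^{n-1}\mathrm{EL}_{cap}(v_0\cdots v_i) \le t\} \cap \mathsf{Recharge}(w,cap)$. *)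

theory Defs
  imports Main "HOL-Library.Extended_Real"
begin

text \<open>An arena (V, V0, V1, E, vI) with V1 = V - V0.\<close>
definition arena :: "'v set \<Rightarrow> 'v set \<Rightarrow> ('v \<times> 'v) set \<Rightarrow> 'v \<Rightarrow> bool" where
  "arena V V0 E vI \<longleftrightarrow> finite V \<and> V0 \<subseteq> V \<and> E \<subseteq> V \<times> V \<and> vI \<in> V \<and>
     (\<forall>v\<in>V. \<exists>v'. (v, v') \<in> E)"

definition play :: "('v \<times> 'v) set \<Rightarrow> 'v \<Rightarrow> (nat \<Rightarrow> 'v) \<Rightarrow> bool" where
  "play E vI \<rho> \<longleftrightarrow> \<rho> 0 = vI \<and> (\<forall>n. (\<rho> n, \<rho> (Suc n)) \<in> E)"

definition prefix :: "(nat \<Rightarrow> 'v) \<Rightarrow> nat \<Rightarrow> 'v list" where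
  "prefix \<rho> n = map \<rho> [0..<Suc n]"

definition strategy :: "'v set \<Rightarrow> 'v set \<Rightarrow> ('v \<times> 'v) set \<Rightarrow> ('v list \<Rightarrow> 'v) \<Rightarrow> bool" where
  "strategy V V0 E \<sigma> \<longleftrightarrow>
     (\<forall>xs. xs \<noteq> [] \<and> set xs \<subseteq> V \<and> last xs \<in> V0 \<longrightarrow> (last xs, \<sigma> xs) \<in> E)"

definition consistent :: "'v set \<Rightarrow> ('v list \<Rightarrow> 'v) \<Rightarrow> (nat \<Rightarrow> 'v) \<Rightarrow> bool" where
  "consistent V0 \<sigma> \<rho> \<longleftrightarrow> (\<forall>n. \<rho> n \<in> V0 \<longrightarrow> \<rho> (Suc n) = \<sigma> (prefix \<rho> n))"

definition wins_with ::
  "'v set \<Rightarrow> 'v set \<Rightarrow> ('v \<times> 'v) set \<Rightarrow> 'v \<Rightarrow> (nat \<Rightarrow> 'v) set \<Rightarrow> ('v list \<Rightarrow> 'v) \<Rightarrow> bool" where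
  "wins_with V V0 E vI Win \<sigma> \<longleftrightarrow> strategy V V0 E \<sigma> \<and>
     (\<forall>\<rho>. play E vI \<rho> \<and> consistent V0 \<sigma> \<rho> \<longrightarrow> \<rho> \<in> Win)"

definition wins :: "'v set \<Rightarrow> 'v set \<Rightarrow> ('v \<times> 'v) set \<Rightarrow> 'v \<Rightarrow> (nat \<Rightarrow> 'v) set \<Rightarrow> bool" where
  "wins V V0 E vI Win \<longleftrightarrow> (\<exists>\<sigma>. wins_with V V0 E vI Win \<sigma>)"

definition edges :: "'v list \<Rightarrow> ('v \<times> 'v) list" where
  "edges xs = zip xs (tl xs)"

definition memory_structure :: "('v \<times> 'v) set \<Rightarrow> 'm set \<Rightarrow> 'm \<Rightarrow> ('m \<Rightarrow> 'v \<times> 'v \<Rightarrow> 'm) \<Rightarrow> bool" where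
  "memory_structure E M mI Upd \<longleftrightarrow> finite M \<and> mI \<in> M \<and> (\<forall>m\<in>M. \<forall>e\<in>E. Upd m e \<in> M)"

definition upd_plus :: "'m \<Rightarrow> ('m \<Rightarrow> 'v \<times> 'v \<Rightarrow> 'm) \<Rightarrow> 'v list \<Rightarrow> 'm" where
  "upd_plus mI Upd xs = foldl Upd mI (edges xs)"

definition next_move :: "'v set \<Rightarrow> ('v \<times> 'v) set \<Rightarrow> 'm set \<Rightarrow> ('v \<Rightarrow> 'm \<Rightarrow> 'v) \<Rightarrow> bool" where
  "next_move V0 E M Nxt \<longleftrightarrow> (\<forall>v\<in>V0. \<forall>m\<in>M. (v, Nxt v m) \<in> E)"

definition induced_strategy :: "'m \<Rightarrow> ('m \<Rightarrow> 'v \<times> 'v \<Rightarrow> 'm) \<Rightarrow> ('v \<Rightarrow> 'm \<Rightarrow> 'v) \<Rightarrow> 'v list \<Rightarrow> 'v" where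
  "induced_strategy mI Upd Nxt xs = Nxt (last xs) (upd_plus mI Upd xs)"

text \<open>Edge labels: a non-positive integer weight, or the recharge action R.\<close>
datatype rweight = Wt int | Rch

definition recharge_weight :: "('v \<times> 'v) set \<Rightarrow> ('v \<times> 'v \<Rightarrow> rweight) \<Rightarrow> bool" where
  "recharge_weight E w \<longleftrightarrow> (\<forall>e\<in>E. \<forall>k. w e = Wt k \<longrightarrow> k \<le> 0)"

definition no_recharge :: "('v \<times> 'v \<Rightarrow> rweight) \<Rightarrow> 'v list \<Rightarrow> bool" where
  "no_recharge w xs \<longleftrightarrow> (\<forall>e\<in>set (edges xs). w e \<noteq> Rch)"

definition EL :: "('v \<times> 'v \<Rightarrow> rweight) \<Rightarrow> 'v list \<Rightarrow> int" where
  "EL w xs = sum_list (map (\<lambda>e. case w e of Wt k \<Rightarrow> k | Rch \<Rightarrow> 0) (edges xs))"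

text \<open>EL_cap(v0...vn) = cap + EL(x), x the longest suffix with no R-edge.\<close>
definition EL_cap :: "('v \<times> 'v \<Rightarrow> rweight) \<Rightarrow> nat \<Rightarrow> 'v list \<Rightarrow> int" where
  "EL_cap w cap xs = int cap + EL w (drop (LEAST k. no_recharge w (drop k xs)) xs)"

definition Recharge :: "('v \<times> 'v \<Rightarrow> rweight) \<Rightarrow> nat \<Rightarrow> (nat \<Rightarrow> 'v) set" where
  "Recharge w cap = {\<rho>. \<forall>n. EL_cap w cap (prefix \<rho> n) \<ge> 0}"

definition AvgRecharge :: "('v \<times> 'v \<Rightarrow> rweight) \<Rightarrow> nat \<Rightarrow> nat \<Rightarrow> (nat \<Rightarrow> 'v) set" where
  "AvgRecharge w cap t =
     {\<rho>. limsup (\<lambda>n. ereal ((\<Sum>i<n. real_of_int (EL_cap w cap (prefix \<rho> i))) / real n))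
           \<le> ereal (real t)} \<inter> Recharge w cap"

end

theory Submission
  imports Defs
begin

text \<open>Memory states \<open>0, \<dots>, cap\<close> record the current energy level and \<open>cap + 1\<close> records that it
  has dropped below zero. In the product of the arena with this memory, weighting a state by
  (energy level \<open>- t\<close>) and the sink by \<open>1\<close>, winning the average-energy objective amounts to
  keeping all partial sums of the weights bounded above, and losing it to letting them grow
  linearly. For this bounded-sum objective positional strategies suffice. The key tool is the
  first-cycle game on the loop-erased history: if Player 0 wins it, replaying it keeps the sums
  bounded, since the history's sum is at most that of its loop erasure; if she loses it, Player 1
  closes only cycles of positive weight and the sums grow linearly. Removing edges at a Player 0
  vertex \<open>v\<close> preserves the winning region of the cycle game if \<open>v\<close> stays won or was lost, and one
  of two complementary removals always qualifies; induction on the number of Player 0 edges then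
  yields a positional strategy on the product, i.e. a strategy with \<open>cap + 2\<close> memory states.\<close>

section \<open>Loop erasure\<close>

definition loop_erase_step :: "'a \<Rightarrow> 'a list \<Rightarrow> 'a list" where
  "loop_erase_step y p = takeWhile (\<lambda>z. z \<noteq> y) p @ [y]"

definition closed_loop :: "'a \<Rightarrow> 'a list \<Rightarrow> 'a list" where
  "closed_loop y p = dropWhile (\<lambda>z. z \<noteq> y) p"

definition loop_erasure :: "'a list \<Rightarrow> 'a list" where
  "loop_erasure h = foldl (\<lambda>p y. loop_erase_step y p) [] h"

lemma loop_erasure_Nil [simp]: "loop_erasure [] = []"
  by (simp add: loop_erasure_def)

lemma loop_erasure_snoc [simp]: "loop_erasure (h @ [y]) = loop_erase_step y (loop_erasure h)"
  by (simp add: loop_erasure_def)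

lemma loop_erasure_singleton [simp]: "loop_erasure [x] = [x]"
  using loop_erasure_snoc[of "[]" x] by (simp add: loop_erase_step_def)

lemma loop_erase_step_notin: "y \<notin> set p \<Longrightarrow> loop_erase_step y p = p @ [y]"
  by (auto simp: loop_erase_step_def takeWhile_eq_all_conv)

lemma closed_loop_notin: "y \<notin> set p \<Longrightarrow> closed_loop y p = []"
  by (auto simp: closed_loop_def)

lemma loop_erase_step_eq_take:
  assumes "y \<in> set p"
  shows "\<exists>k. 0 < k \<and> k \<le> length p \<and> loop_erase_step y p = take k p"
  using assms
proof (induction p)
  case (Cons a p)
  show ?case
  proof (cases "a = y")
    case True
    then show ?thesis by (intro exI[of _ 1]) (simp add: loop_erase_step_def)
  next
    case False
    with Cons obtain k where "0 < k" "k \<le> length p" "loop_erase_step y p = take k p"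
      by auto
    with False show ?thesis by (intro exI[of _ "Suc k"]) (simp add: loop_erase_step_def)
  qed
qed simp

lemma distinct_loop_erasure: "distinct (loop_erasure h)"
proof (induction h rule: rev_induct)
  case (snoc y h)
  have "y \<notin> set (takeWhile (\<lambda>z. z \<noteq> y) (loop_erasure h))"
    by (auto dest: set_takeWhileD)
  with snoc show ?case
    by (simp add: loop_erase_step_def distinct_takeWhile)
qed simp

lemma set_loop_erasure: "set (loop_erasure h) \<subseteq> set h"
  by (induction h rule: rev_induct) (auto simp: loop_erase_step_def dest: set_takeWhileD)

lemma loop_erasure_eq_Nil_iff [simp]: "loop_erasure h = [] \<longleftrightarrow> h = []"
  by (induction h rule: rev_induct) (auto simp: loop_erase_step_def)

lemma last_loop_erasure: "h \<noteq> [] \<Longrightarrow> last (loop_erasure h) = last h"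
  by (induction h rule: rev_induct) (auto simp: loop_erase_step_def)

lemma sum_list_loop_erase_step:
  fixes d :: "'a \<Rightarrow> 'b::comm_monoid_add"
  shows "sum_list (map d p) + d y
           = sum_list (map d (loop_erase_step y p)) + sum_list (map d (closed_loop y p))"
proof -
  have "sum_list (map d p) = sum_list (map d (takeWhile (\<lambda>z. z \<noteq> y) p @ closed_loop y p))"
    by (simp add: closed_loop_def)
  then show ?thesis
    by (simp add: loop_erase_step_def ac_simps)
qed

lemma length_loop_erase_step:
  "length p + 1 = length (loop_erase_step y p) + length (closed_loop y p)"
proof -
  have "length p = length (takeWhile (\<lambda>z. z \<noteq> y) p @ closed_loop y p)"
    by (simp add: closed_loop_def)
  then show ?thesis
    by (simp add: loop_erase_step_def)
qed

lemma prefix_0 [simp]: "prefix \<rho> 0 = [\<rho> 0]"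
  by (simp add: prefix_def)

lemma prefix_Suc [simp]: "prefix \<rho> (Suc n) = prefix \<rho> n @ [\<rho> (Suc n)]"
  by (simp add: prefix_def)

lemma prefix_ne_Nil [simp]: "prefix \<rho> n \<noteq> []"
  by (simp add: prefix_def)

lemma last_prefix [simp]: "last (prefix \<rho> n) = \<rho> n"
  by (simp add: prefix_def)

lemma length_prefix [simp]: "length (prefix \<rho> n) = Suc n"
  by (simp add: prefix_def)

lemma set_prefix: "set (prefix \<rho> n) = \<rho> ` {..n}"
  by (induction n) (auto simp: atMost_Suc)

lemma sum_list_prefix: "sum_list (map d (prefix \<rho> n)) = (\<Sum>i<Suc n. d (\<rho> i))"
  by (induction n) auto

lemma last_loop_erasure_prefix [simp]: "last (loop_erasure (prefix \<rho> n)) = \<rho> n"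
  by (simp add: last_loop_erasure)

lemma take_loop_erase_step:
  assumes "0 < k" "k \<le> length (loop_erase_step y p)"
  shows "y \<notin> set p \<and> take k (loop_erase_step y p) = p @ [y]
         \<or> 0 < k \<and> k \<le> length p \<and> take k (loop_erase_step y p) = take k p"
proof (cases "y \<in> set p")
  case True
  then obtain k0 where "k0 \<le> length p" "loop_erase_step y p = take k0 p"
    using loop_erase_step_eq_take[OF True] by blast
  with assms show ?thesis by (simp add: min_absorb1)
next
  case False
  with assms show ?thesis
    by (cases "k \<le> length p") (simp_all add: loop_erase_step_notin)
qed

text \<open>Every stack is a prefix of its predecessor or extends it by one vertex, so the invariant is
  carried along for all nonempty prefixes of the stack.\<close>
lemma loop_erasure_invariant:
  assumes start: "Q [\<rho> 0]"
    and extend: "\<And>n. Q (loop_erasure (prefix \<rho> n)) \<Longrightarrow> \<rho> (Suc n) \<notin> set (loop_erasure (prefix \<rho> n))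
                   \<Longrightarrow> Q (loop_erasure (prefix \<rho> n) @ [\<rho> (Suc n)])"
  shows "Q (loop_erasure (prefix \<rho> n))"
proof -
  have "\<forall>k. 0 < k \<longrightarrow> k \<le> length (loop_erasure (prefix \<rho> n))
            \<longrightarrow> Q (take k (loop_erasure (prefix \<rho> n)))"
  proof (induction n)
    case 0
    then show ?case using start by (auto simp: le_Suc_eq)
  next
    case (Suc n)
    let ?p = "loop_erasure (prefix \<rho> n)" and ?y = "\<rho> (Suc n)"
    have "Q ?p"
      using Suc.IH[rule_format, of "length ?p"] by simp
    show ?case
    proof (intro allI impI)
      fix k assume "0 < k" "k \<le> length (loop_erasure (prefix \<rho> (Suc n)))"
      then consider "?y \<notin> set ?p" "take k (loop_erasure (prefix \<rho> (Suc n))) = ?p @ [?y]"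
        | "0 < k" "k \<le> length ?p" "take k (loop_erasure (prefix \<rho> (Suc n))) = take k ?p"
        using take_loop_erase_step[of k ?y ?p] by auto
      then show "Q (take k (loop_erasure (prefix \<rho> (Suc n))))"
      proof cases
        case 1
        then show ?thesis using extend[of n] \<open>Q ?p\<close> by simp
      next
        case 2
        then show ?thesis using Suc.IH by simp
      qed
    qed
  qed
  from this[rule_format, of "length (loop_erasure (prefix \<rho> n))"] show ?thesis
    by simp
qed

lemma sum_list_prefix_le_loop_erasure:
  fixes d :: "'a \<Rightarrow> int"
  assumes "\<And>n. sum_list (map d (closed_loop (\<rho> (Suc n)) (loop_erasure (prefix \<rho> n)))) \<le> 0"
  shows "sum_list (map d (prefix \<rho> n)) \<le> sum_list (map d (loop_erasure (prefix \<rho> n)))"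
proof (induction n)
  case (Suc n)
  then show ?case
    using sum_list_loop_erase_step[of d "loop_erasure (prefix \<rho> n)" "\<rho> (Suc n)"] assms[of n]
    by simp
qed simp

text \<open>A popped loop has at most \<open>N\<close> vertices and weight at least \<open>1\<close>, so it contributes at
  least \<open>1/N\<close> per popped vertex.\<close>
lemma loop_erasure_linear_bound:
  fixes d :: "'a \<Rightarrow> int"
  assumes pos: "\<And>n. \<rho> (Suc n) \<in> set (loop_erasure (prefix \<rho> n))
                 \<Longrightarrow> 1 \<le> sum_list (map d (closed_loop (\<rho> (Suc n)) (loop_erasure (prefix \<rho> n))))"
    and short: "\<And>n. length (loop_erasure (prefix \<rho> n)) \<le> N"
  shows "int N * sum_list (map d (loop_erasure (prefix \<rho> n))) - int (length (loop_erasure (prefix \<rho> n)))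
         \<le> int N * sum_list (map d (prefix \<rho> n)) - int (length (prefix \<rho> n))"
proof (induction n)
  case (Suc n)
  let ?p = "loop_erasure (prefix \<rho> n)" and ?y = "\<rho> (Suc n)"
  let ?c = "closed_loop ?y ?p"
  have "int (length ?c) \<le> int N * sum_list (map d ?c)"
  proof (cases "?y \<in> set ?p")
    case True
    have "length ?c \<le> N"
      using short[of n] length_dropWhile_le order_trans unfolding closed_loop_def by blast
    moreover have "int N * 1 \<le> int N * sum_list (map d ?c)"
      using pos[OF True] by (intro mult_left_mono) auto
    ultimately show ?thesis by linarith
  qed (simp add: closed_loop_notin)
  moreover have "int N * (sum_list (map d ?p) + d ?y)
      = int N * sum_list (map d (loop_erase_step ?y ?p)) + int N * sum_list (map d ?c)"
    by (simp add: sum_list_loop_erase_step distrib_left)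
  moreover have "int (length ?p) + 1 = int (length (loop_erase_step ?y ?p)) + int (length ?c)"
    using length_loop_erase_step[of ?p ?y] by linarith
  ultimately show ?case
    using Suc.IH by (simp add: algebra_simps)
qed simp

section \<open>Plays and strategies on a game graph\<close>

definition game_graph :: "'a set \<Rightarrow> ('a \<times> 'a) set \<Rightarrow> bool" where
  "game_graph S Ed \<longleftrightarrow> Ed \<subseteq> S \<times> S \<and> (\<forall>s\<in>S. \<exists>y. (s, y) \<in> Ed)"

definition bounded_sums :: "('a \<Rightarrow> int) \<Rightarrow> (nat \<Rightarrow> 'a) \<Rightarrow> bool" where
  "bounded_sums d \<rho> \<longleftrightarrow> (\<exists>K. \<forall>n. (\<Sum>i<n. d (\<rho> i)) \<le> K)"

definition sums_grow_linearly :: "nat \<Rightarrow> ('a \<Rightarrow> int) \<Rightarrow> (nat \<Rightarrow> 'a) \<Rightarrow> bool" where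
  "sums_grow_linearly N d \<rho> \<longleftrightarrow> (\<exists>K. \<forall>n. int n \<le> int N * (\<Sum>i<n. d (\<rho> i)) + K)"

definition choose_succ :: "('a \<times> 'a) set \<Rightarrow> ('a \<Rightarrow> bool) \<Rightarrow> 'a \<Rightarrow> 'a" where
  "choose_succ Ed P x = (SOME y. (x, y) \<in> Ed \<and> (P y \<or> (\<forall>z. (x, z) \<in> Ed \<longrightarrow> \<not> P z)))"

lemma choose_succ:
  assumes "(x, y) \<in> Ed"
  shows choose_succ_in_edges: "(x, choose_succ Ed P x) \<in> Ed"
    and choose_succ_prop: "(x, z) \<in> Ed \<Longrightarrow> P z \<Longrightarrow> P (choose_succ Ed P x)"
proof -
  have "\<exists>y. (x, y) \<in> Ed \<and> (P y \<or> (\<forall>z. (x, z) \<in> Ed \<longrightarrow> \<not> P z))"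
    using assms by blast
  from someI_ex[OF this] show "(x, choose_succ Ed P x) \<in> Ed"
    and "(x, z) \<in> Ed \<Longrightarrow> P z \<Longrightarrow> P (choose_succ Ed P x)"
    unfolding choose_succ_def by blast+
qed

lemma game_graph_succ:
  assumes "game_graph S Ed" "x \<in> S"
  obtains y where "(x, y) \<in> Ed"
  using assms by (auto simp: game_graph_def)

lemma play_in_graph:
  assumes "game_graph S Ed" "s \<in> S" "play Ed s \<rho>"
  shows "\<rho> n \<in> S"
proof (cases n)
  case (Suc m)
  then show ?thesis using assms by (auto simp: game_graph_def play_def)
qed (use assms in \<open>simp add: play_def\<close>)

lemma play_suffix: "play Ed s \<rho> \<Longrightarrow> play Ed (\<rho> k) (\<lambda>i. \<rho> (i + k))"
  by (simp add: play_def)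

lemma play_mono: "Ed' \<subseteq> Ed \<Longrightarrow> play Ed' s \<rho> \<Longrightarrow> play Ed s \<rho>"
  by (auto simp: play_def)

lemma consistent_positional_iff:
  "consistent A0 (\<lambda>h. \<pi> (last h)) \<rho> \<longleftrightarrow> (\<forall>n. \<rho> n \<in> A0 \<longrightarrow> \<rho> (Suc n) = \<pi> (\<rho> n))"
  by (simp add: consistent_def)

lemma sum_lessThan_add:
  fixes f :: "nat \<Rightarrow> 'b::comm_monoid_add"
  shows "(\<Sum>i<k + n. f i) = (\<Sum>i<k. f i) + (\<Sum>i<n. f (i + k))"
  by (induction n) (simp_all add: ac_simps)

lemma bounded_sums_suffix_iff: "bounded_sums d (\<lambda>i. \<rho> (i + k)) \<longleftrightarrow> bounded_sums d \<rho>"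
proof
  assume "bounded_sums d (\<lambda>i. \<rho> (i + k))"
  then obtain K where K: "\<And>n. (\<Sum>i<n. d (\<rho> (i + k))) \<le> K"
    unfolding bounded_sums_def by blast
  define C where "C = (\<Sum>i<k. \<bar>d (\<rho> i)\<bar>)"
  have "(\<Sum>i<n. d (\<rho> i)) \<le> C + max K 0" for n
  proof (cases "n \<le> k")
    case True
    have "(\<Sum>i<n. d (\<rho> i)) \<le> (\<Sum>i<n. \<bar>d (\<rho> i)\<bar>)" by (intro sum_mono) simp
    also have "\<dots> \<le> C" unfolding C_def using True by (intro sum_mono2) auto
    finally show ?thesis by simp
  next
    case False
    then obtain m where m: "n = k + m" by (metis le_add_diff_inverse nat_le_linear)
    have "(\<Sum>i<k. d (\<rho> i)) \<le> C" unfolding C_def by (intro sum_mono) simp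
    then show ?thesis using K[of m] by (simp add: m sum_lessThan_add)
  qed
  then show "bounded_sums d \<rho>" unfolding bounded_sums_def by blast
next
  assume "bounded_sums d \<rho>"
  then obtain K where K: "\<And>n. (\<Sum>i<n. d (\<rho> i)) \<le> K"
    unfolding bounded_sums_def by blast
  have "(\<Sum>i<n. d (\<rho> (i + k))) \<le> K - (\<Sum>i<k. d (\<rho> i))" for n
    using K[of "k + n"] by (simp add: sum_lessThan_add)
  then show "bounded_sums d (\<lambda>i. \<rho> (i + k))" unfolding bounded_sums_def by blast
qed

lemma sums_grow_linearly_suffix:
  assumes "sums_grow_linearly N d \<rho>"
  shows "sums_grow_linearly N d (\<lambda>i. \<rho> (i + k))"
proof -
  obtain K where K: "\<And>n. int n \<le> int N * (\<Sum>i<n. d (\<rho> i)) + K"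
    using assms unfolding sums_grow_linearly_def by blast
  have "int n \<le> int N * (\<Sum>i<n. d (\<rho> (i + k))) + (int N * (\<Sum>i<k. d (\<rho> i)) + K)" for n
    using K[of "k + n"] by (simp add: sum_lessThan_add algebra_simps)
  then show ?thesis unfolding sums_grow_linearly_def by blast
qed

lemma not_bounded_and_growing: "bounded_sums d \<rho> \<Longrightarrow> \<not> sums_grow_linearly N d \<rho>"
proof
  assume "bounded_sums d \<rho>" "sums_grow_linearly N d \<rho>"
  then obtain K K' where K: "\<And>n. int n \<le> int N * (\<Sum>i<n. d (\<rho> i)) + K"
    and K': "\<And>n. (\<Sum>i<n. d (\<rho> i)) \<le> K'"
    unfolding bounded_sums_def sums_grow_linearly_def by blast
  define n where "n = Suc (nat (int N * K' + K))"
  have "int N * (\<Sum>i<n. d (\<rho> i)) \<le> int N * K'"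
    using K'[of n] by (intro mult_left_mono) auto
  then have "int n \<le> int N * K' + K" using K[of n] by linarith
  then show False unfolding n_def by linarith
qed

lemma dropWhile_prefix_first_visit:
  assumes "\<rho> k = v" "\<And>j. j < k \<Longrightarrow> \<rho> j \<noteq> v"
  shows "dropWhile (\<lambda>z. z \<noteq> v) (prefix \<rho> (i + k)) = prefix (\<lambda>j. \<rho> (j + k)) i"
proof -
  have "[0..<Suc (k + i)] = [0..<k] @ map (\<lambda>j. j + k) [0..<Suc i]"
    using upt_add_eq_append[of 0 k "Suc i"] by (simp add: map_add_upt add.commute)
  then have "prefix \<rho> (i + k) = map \<rho> [0..<k] @ prefix (\<lambda>j. \<rho> (j + k)) i"
    unfolding prefix_def by (simp add: add.commute)
  moreover have "dropWhile (\<lambda>z. z \<noteq> v) (map \<rho> [0..<k] @ prefix (\<lambda>j. \<rho> (j + k)) i)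
                   = dropWhile (\<lambda>z. z \<noteq> v) (prefix (\<lambda>j. \<rho> (j + k)) i)"
    using assms(2) by (intro dropWhile_append2) force
  moreover have "dropWhile (\<lambda>z. z \<noteq> v) (prefix (\<lambda>j. \<rho> (j + k)) i) = prefix (\<lambda>j. \<rho> (j + k)) i"
    using assms(1) unfolding prefix_def by (simp add: upt_conv_Cons del: upt_Suc)
  ultimately show ?thesis by simp
qed

definition restricts_at :: "'a \<Rightarrow> ('a \<times> 'a) set \<Rightarrow> ('a \<times> 'a) set \<Rightarrow> bool" where
  "restricts_at v Ed Ed' \<longleftrightarrow> Ed' \<subseteq> Ed \<and> (\<forall>x y. x \<noteq> v \<longrightarrow> (x, y) \<in> Ed \<longrightarrow> (x, y) \<in> Ed')"

lemma play_restricts_at: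
  assumes "restricts_at v Ed Ed'" "play Ed s \<rho>"
    and "\<And>n. \<rho> n = v \<Longrightarrow> (v, \<rho> (Suc n)) \<in> Ed'"
  shows "play Ed' s \<rho>"
  using assms unfolding play_def restricts_at_def by metis

lemma first_visit:
  fixes \<rho> :: "nat \<Rightarrow> 'a"
  assumes "\<exists>k. \<rho> k = v"
  obtains k where "\<rho> k = v" "\<And>j. j < k \<Longrightarrow> \<rho> j \<noteq> v"
  using assms exists_least_iff[of "\<lambda>k. \<rho> k = v"] by metis

definition switch_at :: "'a \<Rightarrow> ('a list \<Rightarrow> 'a) \<Rightarrow> ('a list \<Rightarrow> 'a) \<Rightarrow> 'a list \<Rightarrow> 'a" where
  "switch_at v \<sigma> \<sigma>' h = (if v \<in> set h then \<sigma>' (dropWhile (\<lambda>z. z \<noteq> v) h) else \<sigma> h)"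

lemma strategy_switch_at:
  assumes "strategy S A0 Ed \<sigma>" "strategy S A0 Ed' \<sigma>'" "restricts_at v Ed Ed'"
  shows "strategy S A0 Ed' (switch_at v \<sigma> \<sigma>')"
  unfolding strategy_def
proof (intro allI impI, elim conjE)
  fix h assume h: "h \<noteq> []" "set h \<subseteq> S" "last h \<in> A0"
  show "(last h, switch_at v \<sigma> \<sigma>' h) \<in> Ed'"
  proof (cases "v \<in> set h")
    case True
    let ?h' = "dropWhile (\<lambda>z. z \<noteq> v) h"
    have "?h' \<noteq> []" using True by (auto simp: dropWhile_eq_Nil_conv)
    moreover from this have "last ?h' = last h"
      by (metis last_appendR takeWhile_dropWhile_id)
    moreover have "set ?h' \<subseteq> S" using h(2) set_dropWhileD by fastforce
    ultimately have "?h' \<noteq> [] \<and> set ?h' \<subseteq> S \<and> last ?h' \<in> A0"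
      using h(3) by simp
    then have "(last ?h', \<sigma>' ?h') \<in> Ed'"
      using assms(2) unfolding strategy_def by blast
    with True \<open>last ?h' = last h\<close> show ?thesis by (simp add: switch_at_def)
  next
    case False
    then have "last h \<noteq> v" using h(1) last_in_set by metis
    then show ?thesis
      using False h assms(1,3) by (auto simp: switch_at_def strategy_def restricts_at_def)
  qed
qed

lemma consistent_switch_at_before:
  assumes "consistent A0 (switch_at v \<sigma> \<sigma>') \<rho>" "\<And>j. j < k \<Longrightarrow> \<rho> j \<noteq> v" "i < k" "\<rho> i \<in> A0"
  shows "\<rho> (Suc i) = \<sigma> (prefix \<rho> i)"
proof -
  have "v \<notin> set (prefix \<rho> i)"
    using assms(2,3) by (auto simp: set_prefix) (metis le_less_trans)
  with assms(1,4) show ?thesis by (simp add: consistent_def switch_at_def)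
qed

lemma consistent_switch_at_unvisited:
  assumes "consistent A0 (switch_at v \<sigma> \<sigma>') \<rho>" "\<And>k. \<rho> k \<noteq> v"
  shows "consistent A0 \<sigma> \<rho>"
  using consistent_switch_at_before[OF assms(1)] assms(2) unfolding consistent_def by blast

lemma consistent_switch_at_after:
  assumes cons: "consistent A0 (switch_at v \<sigma> \<sigma>') \<rho>"
    and k: "\<rho> k = v" and before: "\<And>j. j < k \<Longrightarrow> \<rho> j \<noteq> v"
  shows "consistent A0 \<sigma>' (\<lambda>i. \<rho> (i + k))"
  unfolding consistent_def
proof (intro allI impI)
  fix i assume "\<rho> (i + k) \<in> A0"
  then have "\<rho> (Suc i + k) = switch_at v \<sigma> \<sigma>' (prefix \<rho> (i + k))"
    using cons by (simp add: consistent_def)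
  moreover have "v \<in> set (prefix \<rho> (i + k))"
    using k by (auto simp: set_prefix)
  ultimately show "\<rho> (Suc i + k) = \<sigma>' (prefix (\<lambda>i. \<rho> (i + k)) i)"
    by (simp add: switch_at_def dropWhile_prefix_first_visit[where \<rho>=\<rho> and k=k and v=v, OF k before])
qed

definition splice_play :: "nat \<Rightarrow> (nat \<Rightarrow> 'a) \<Rightarrow> (nat \<Rightarrow> 'a) \<Rightarrow> nat \<Rightarrow> 'a" where
  "splice_play k \<rho> \<rho>' i = (if i < k then \<rho> i else \<rho>' (i - k))"

lemma splice_play_suffix [simp]: "(\<lambda>i. splice_play k \<rho> \<rho>' (i + k)) = \<rho>'"
  by (simp add: splice_play_def)

lemma prefix_splice_play_low: "\<rho>' 0 = \<rho> k \<Longrightarrow> i \<le> k \<Longrightarrow> prefix (splice_play k \<rho> \<rho>') i = prefix \<rho> i"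
  by (auto simp: prefix_def splice_play_def)

lemma prefix_splice_play_high: "prefix (splice_play k \<rho> \<rho>') (k + j) = map \<rho> [0..<k] @ prefix \<rho>' j"
proof (induction j)
  case 0
  have "[0..<Suc k] = [0..<k] @ [k]" by simp
  then show ?case by (simp add: prefix_def splice_play_def)
next
  case (Suc j)
  then show ?case by (simp add: splice_play_def)
qed

lemma play_splice_play:
  assumes "\<rho> 0 = s" "\<And>i. i < k \<Longrightarrow> (\<rho> i, \<rho> (Suc i)) \<in> Ed" "play Ed (\<rho> k) \<rho>'"
  shows "play Ed s (splice_play k \<rho> \<rho>')"
  unfolding play_def
proof (intro conjI allI)
  show "splice_play k \<rho> \<rho>' 0 = s"
    using assms by (cases k) (auto simp: splice_play_def play_def)
  fix n
  consider "Suc n < k" | "Suc n = k" | "k \<le> n" by linarith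
  then show "(splice_play k \<rho> \<rho>' n, splice_play k \<rho> \<rho>' (Suc n)) \<in> Ed"
  proof cases
    case 3
    then have "Suc n - k = Suc (n - k)" by simp
    then show ?thesis using assms(3) 3 by (simp add: splice_play_def play_def)
  qed (use assms in \<open>auto simp: splice_play_def play_def\<close>)
qed

lemma consistent_splice_play:
  assumes "\<rho>' 0 = \<rho> k"
    and "\<And>i. i < k \<Longrightarrow> \<rho> i \<in> A0 \<Longrightarrow> \<rho> (Suc i) = \<sigma> (prefix \<rho> i)"
    and "consistent A0 (\<lambda>h. \<sigma> (map \<rho> [0..<k] @ h)) \<rho>'"
  shows "consistent A0 \<sigma> (splice_play k \<rho> \<rho>')"
  unfolding consistent_def
proof (intro allI impI)
  fix i assume A: "splice_play k \<rho> \<rho>' i \<in> A0"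
  show "splice_play k \<rho> \<rho>' (Suc i) = \<sigma> (prefix (splice_play k \<rho> \<rho>') i)"
  proof (cases "i < k")
    case True
    then have "splice_play k \<rho> \<rho>' (Suc i) = \<rho> (Suc i)"
      using assms(1) by (cases "Suc i = k") (auto simp: splice_play_def)
    then show ?thesis
      using assms(2)[OF True] A True prefix_splice_play_low[where \<rho>=\<rho> and \<rho>'=\<rho>' and k=k and i=i, OF assms(1)] by (simp add: splice_play_def)
  next
    case False
    then obtain j where j: "i = k + j" using le_Suc_ex not_less by blast
    have "splice_play k \<rho> \<rho>' (Suc i) = \<rho>' (Suc j)" "splice_play k \<rho> \<rho>' i = \<rho>' j"
      by (simp_all add: j splice_play_def)
    then show ?thesis
      using assms(3) A by (simp add: consistent_def j prefix_splice_play_high)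
  qed
qed

lemma strategy_move:
  "strategy S A0 Ed \<sigma> \<Longrightarrow> set (prefix \<rho> n) \<subseteq> S \<Longrightarrow> \<rho> n \<in> A0 \<Longrightarrow> (\<rho> n, \<sigma> (prefix \<rho> n)) \<in> Ed"
  unfolding strategy_def by (metis last_prefix prefix_ne_Nil)

lemma play_of_strategies:
  assumes graph: "game_graph S Ed" and s: "s \<in> S" and \<sigma>: "strategy S A0 Ed \<sigma>"
    and \<tau>: "\<And>h. h \<noteq> [] \<Longrightarrow> last h \<in> S - A0 \<Longrightarrow> (last h, \<tau> h) \<in> Ed"
  obtains \<rho> where "play Ed s \<rho>" "consistent A0 \<sigma> \<rho>"
    "\<And>n. \<rho> n \<notin> A0 \<Longrightarrow> \<rho> (Suc n) = \<tau> (prefix \<rho> n)"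
proof -
  define nxt where "nxt h = (if last h \<in> A0 then \<sigma> h else \<tau> h)" for h
  define hist where "hist = rec_nat [s] (\<lambda>_ h. h @ [nxt h])"
  define \<rho> where "\<rho> n = last (hist n)" for n
  have prefix_\<rho>: "prefix \<rho> n = hist n" for n
    by (induction n) (simp_all add: \<rho>_def hist_def)
  have \<rho>_Suc: "\<rho> (Suc n) = nxt (prefix \<rho> n)" for n
    by (simp add: \<rho>_def prefix_\<rho> hist_def)
  have step: "(\<rho> n, \<rho> (Suc n)) \<in> Ed \<and> \<rho> (Suc n) \<in> S" if "set (prefix \<rho> n) \<subseteq> S" for n
  proof -
    have "\<rho> n \<in> S" using that by (auto simp: set_prefix)
    then have "(\<rho> n, nxt (prefix \<rho> n)) \<in> Ed"
      using strategy_move[OF \<sigma> that] \<tau>[of "prefix \<rho> n"] by (auto simp: nxt_def)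
    then show ?thesis using graph by (auto simp: \<rho>_Suc game_graph_def)
  qed
  have \<rho>_0: "\<rho> 0 = s" by (simp add: \<rho>_def hist_def)
  have "set (prefix \<rho> n) \<subseteq> S" for n
    by (induction n) (use s step in \<open>simp_all add: \<rho>_0\<close>)
  with step \<rho>_0 have "play Ed s \<rho>" by (simp add: play_def)
  moreover have "consistent A0 \<sigma> \<rho>" "\<And>n. \<rho> n \<notin> A0 \<Longrightarrow> \<rho> (Suc n) = \<tau> (prefix \<rho> n)"
    by (simp_all add: consistent_def \<rho>_Suc nxt_def)
  ultimately show thesis using that by blast
qed

section \<open>The first-cycle game\<close>

locale bounded_sum_game =
  fixes S :: "'a set" and A0 :: "'a set" and d :: "'a \<Rightarrow> int"
  assumes finite_S: "finite S" and A0_subset: "A0 \<subseteq> S"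
begin

text \<open>The first-cycle game on \<open>Ed\<close>, played on the loop-erased history \<open>p\<close>: it stops as soon as a
  vertex repeats, and Player 0 wins iff the cycle closed at that moment has weight \<open>\<le> 0\<close>.\<close>
inductive cycle_win :: "('a \<times> 'a) set \<Rightarrow> 'a list \<Rightarrow> bool" for Ed where
  player0: "\<lbrakk>last p \<in> A0; (last p, y) \<in> Ed;
             y \<in> set p \<and> sum_list (map d (closed_loop y p)) \<le> 0 \<or> y \<notin> set p \<and> cycle_win Ed (p @ [y])\<rbrakk>
            \<Longrightarrow> cycle_win Ed p"
| player1: "\<lbrakk>last p \<notin> A0; \<forall>y. (last p, y) \<in> Ed \<longrightarrow>
             y \<in> set p \<and> sum_list (map d (closed_loop y p)) \<le> 0 \<or> y \<notin> set p \<and> cycle_win Ed (p @ [y])\<rbrakk>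
            \<Longrightarrow> cycle_win Ed p"

definition good_succ :: "('a \<times> 'a) set \<Rightarrow> 'a list \<Rightarrow> 'a \<Rightarrow> bool" where
  "good_succ Ed p y \<longleftrightarrow>
     y \<in> set p \<and> sum_list (map d (closed_loop y p)) \<le> 0 \<or> y \<notin> set p \<and> cycle_win Ed (p @ [y])"

lemma cycle_win_iff:
  "cycle_win Ed p \<longleftrightarrow>
     (if last p \<in> A0 then \<exists>y. (last p, y) \<in> Ed \<and> good_succ Ed p y
      else \<forall>y. (last p, y) \<in> Ed \<longrightarrow> good_succ Ed p y)"
  unfolding good_succ_def
  by (rule iffI, erule cycle_win.cases) (auto split: if_splits intro: cycle_win.intros)

lemma closed_loop_nonpos_if_good_succ:
  "good_succ Ed p y \<Longrightarrow> sum_list (map d (closed_loop y p)) \<le> 0"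
  by (auto simp: good_succ_def closed_loop_notin)

lemma good_succ_along_play:
  assumes "cycle_win Ed [\<rho> 0]"
    and "\<And>n. cycle_win Ed (loop_erasure (prefix \<rho> n))
           \<Longrightarrow> good_succ Ed (loop_erasure (prefix \<rho> n)) (\<rho> (Suc n))"
  shows "good_succ Ed (loop_erasure (prefix \<rho> n)) (\<rho> (Suc n))"
proof -
  have "cycle_win Ed (loop_erasure (prefix \<rho> n))"
    by (rule loop_erasure_invariant) (use assms in \<open>auto simp: good_succ_def\<close>)
  then show ?thesis by (rule assms(2))
qed

lemma not_good_succ_along_play:
  assumes "\<not> cycle_win Ed [\<rho> 0]"
    and "\<And>n. \<not> cycle_win Ed (loop_erasure (prefix \<rho> n))
           \<Longrightarrow> \<not> good_succ Ed (loop_erasure (prefix \<rho> n)) (\<rho> (Suc n))"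
  shows "\<not> good_succ Ed (loop_erasure (prefix \<rho> n)) (\<rho> (Suc n))"
proof -
  have "\<not> cycle_win Ed (loop_erasure (prefix \<rho> n))"
    by (rule loop_erasure_invariant[where Q = "\<lambda>p. \<not> cycle_win Ed p"])
       (use assms in \<open>auto simp: good_succ_def\<close>)
  then show ?thesis by (rule assms(2))
qed

lemma loop_erasure_bounds:
  assumes "\<And>n. \<rho> n \<in> S"
  shows "length (loop_erasure (prefix \<rho> n)) \<le> card S"
    and "\<bar>sum_list (map d (loop_erasure (prefix \<rho> n)))\<bar> \<le> (\<Sum>x\<in>S. \<bar>d x\<bar>)"
proof -
  let ?p = "loop_erasure (prefix \<rho> n)"
  have sub: "set ?p \<subseteq> S"
    using set_loop_erasure[of "prefix \<rho> n"] assms by (auto simp: set_prefix)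
  then show "length ?p \<le> card S"
    by (metis card_mono distinct_card distinct_loop_erasure finite_S)
  have "\<bar>sum_list (map d ?p)\<bar> = \<bar>sum d (set ?p)\<bar>"
    by (simp add: sum_list_distinct_conv_sum_set distinct_loop_erasure)
  also have "\<dots> \<le> (\<Sum>x\<in>set ?p. \<bar>d x\<bar>)" by (rule sum_abs)
  also have "\<dots> \<le> (\<Sum>x\<in>S. \<bar>d x\<bar>)" using sub finite_S by (intro sum_mono2) auto
  finally show "\<bar>sum_list (map d ?p)\<bar> \<le> (\<Sum>x\<in>S. \<bar>d x\<bar>)" .
qed

lemma bounded_sums_if_loops_nonpos:
  assumes "\<And>n. \<rho> n \<in> S"
    and "\<And>n. sum_list (map d (closed_loop (\<rho> (Suc n)) (loop_erasure (prefix \<rho> n)))) \<le> 0"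
  shows "bounded_sums d \<rho>"
proof -
  have "(\<Sum>i<n. d (\<rho> i)) \<le> (\<Sum>x\<in>S. \<bar>d x\<bar>)" for n
  proof (cases n)
    case 0
    then show ?thesis by (simp add: sum_nonneg)
  next
    case (Suc m)
    have "(\<Sum>i<n. d (\<rho> i)) \<le> sum_list (map d (loop_erasure (prefix \<rho> m)))"
      using sum_list_prefix_le_loop_erasure[where d=d and \<rho>=\<rho> and n=m] assms(2) by (simp add: Suc sum_list_prefix)
    then show ?thesis using loop_erasure_bounds(2)[where \<rho>=\<rho> and n=m, OF assms(1)] by linarith
  qed
  then show ?thesis unfolding bounded_sums_def by blast
qed

lemma sums_grow_linearly_if_loops_pos:
  assumes "\<And>n. \<rho> n \<in> S"
    and "\<And>n. \<rho> (Suc n) \<in> set (loop_erasure (prefix \<rho> n))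
           \<Longrightarrow> 1 \<le> sum_list (map d (closed_loop (\<rho> (Suc n)) (loop_erasure (prefix \<rho> n))))"
  shows "sums_grow_linearly (card S) d \<rho>"
proof -
  define B where "B = (\<Sum>x\<in>S. \<bar>d x\<bar>)"
  define N where "N = card S"
  have "int n \<le> int N * (\<Sum>i<n. d (\<rho> i)) + (int N * B + int N)" for n
  proof (cases n)
    case 0
    then show ?thesis by (simp add: B_def sum_nonneg)
  next
    case (Suc m)
    let ?p = "loop_erasure (prefix \<rho> m)"
    have "int N * sum_list (map d ?p) - int (length ?p)
          \<le> int N * sum_list (map d (prefix \<rho> m)) - int (Suc m)"
      using loop_erasure_linear_bound[where \<rho>=\<rho> and d=d and N=N and n=m] assms loop_erasure_bounds(1)
      by (simp add: N_def)
    moreover have "int N * (- B) \<le> int N * sum_list (map d ?p)"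
      using loop_erasure_bounds(2)[where \<rho>=\<rho> and n=m, OF assms(1)] by (intro mult_left_mono) (auto simp: B_def)
    moreover have "int (length ?p) \<le> int N"
      using loop_erasure_bounds(1)[where \<rho>=\<rho> and n=m, OF assms(1)] by (simp add: N_def)
    ultimately show ?thesis
      by (simp add: Suc sum_list_prefix algebra_simps)
  qed
  then show ?thesis unfolding sums_grow_linearly_def N_def by blast
qed

definition cycle_strategy :: "('a \<times> 'a) set \<Rightarrow> 'a list \<Rightarrow> 'a" where
  "cycle_strategy Ed h = choose_succ Ed (good_succ Ed (loop_erasure h)) (last h)"

lemma strategy_cycle_strategy:
  assumes "game_graph S Ed"
  shows "strategy S A0 Ed (cycle_strategy Ed)"
  unfolding strategy_def cycle_strategy_def
  using assms A0_subset by (auto elim!: game_graph_succ intro: choose_succ_in_edges)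

lemma bounded_sums_cycle_strategy:
  assumes graph: "game_graph S Ed" and s: "s \<in> S" and win: "cycle_win Ed [s]"
    and play: "play Ed s \<rho>" and cons: "consistent A0 (cycle_strategy Ed) \<rho>"
  shows "bounded_sums d \<rho>"
proof (rule bounded_sums_if_loops_nonpos)
  show in_S: "\<rho> n \<in> S" for n using play_in_graph[OF graph s play] .
  fix n
  have "good_succ Ed (loop_erasure (prefix \<rho> n)) (\<rho> (Suc n))"
  proof (rule good_succ_along_play)
    show "cycle_win Ed [\<rho> 0]" using win play by (simp add: play_def)
    fix n
    assume "cycle_win Ed (loop_erasure (prefix \<rho> n))"
    moreover have edge: "(\<rho> n, \<rho> (Suc n)) \<in> Ed" using play by (simp add: play_def)
    moreover have "\<rho> (Suc n) = cycle_strategy Ed (prefix \<rho> n)" if "\<rho> n \<in> A0"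
      using cons that by (simp add: consistent_def)
    ultimately show "good_succ Ed (loop_erasure (prefix \<rho> n)) (\<rho> (Suc n))"
      by (auto simp: cycle_win_iff[of Ed] cycle_strategy_def split: if_splits
               intro: choose_succ_prop[OF edge])
  qed
  then show "sum_list (map d (closed_loop (\<rho> (Suc n)) (loop_erasure (prefix \<rho> n)))) \<le> 0"
    by (rule closed_loop_nonpos_if_good_succ)
qed

lemma growing_play_if_not_cycle_win:
  assumes graph: "game_graph S Ed" and s: "s \<in> S" and lose: "\<not> cycle_win Ed [s]"
    and \<sigma>: "strategy S A0 Ed \<sigma>"
  obtains \<rho> where "play Ed s \<rho>" "consistent A0 \<sigma> \<rho>" "sums_grow_linearly (card S) d \<rho>"
proof -
  define \<tau> where "\<tau> h = choose_succ Ed (\<lambda>y. \<not> good_succ Ed (loop_erasure h) y) (last h)" for h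
  have "(last h, \<tau> h) \<in> Ed" if "last h \<in> S - A0" for h
    using graph that by (auto elim!: game_graph_succ simp: \<tau>_def intro: choose_succ_in_edges)
  then obtain \<rho> where play: "play Ed s \<rho>" and cons: "consistent A0 \<sigma> \<rho>"
    and \<tau>_move: "\<And>n. \<rho> n \<notin> A0 \<Longrightarrow> \<rho> (Suc n) = \<tau> (prefix \<rho> n)"
    using play_of_strategies[OF graph s \<sigma>] by metis
  have "sums_grow_linearly (card S) d \<rho>"
  proof (rule sums_grow_linearly_if_loops_pos)
    show in_S: "\<rho> n \<in> S" for n using play_in_graph[OF graph s play] .
    fix n
    have "\<not> good_succ Ed (loop_erasure (prefix \<rho> n)) (\<rho> (Suc n))"
    proof (rule not_good_succ_along_play)
      show "\<not> cycle_win Ed [\<rho> 0]" using lose play by (simp add: play_def)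
      fix n
      assume "\<not> cycle_win Ed (loop_erasure (prefix \<rho> n))"
      moreover have edge: "(\<rho> n, \<rho> (Suc n)) \<in> Ed" using play by (simp add: play_def)
      ultimately show "\<not> good_succ Ed (loop_erasure (prefix \<rho> n)) (\<rho> (Suc n))"
        using \<tau>_move[of n]
          choose_succ_prop[OF edge, where P = "\<lambda>y. \<not> good_succ Ed (loop_erasure (prefix \<rho> n)) y"]
        by (auto simp: cycle_win_iff[of Ed] \<tau>_def split: if_splits)
    qed
    then show "\<rho> (Suc n) \<in> set (loop_erasure (prefix \<rho> n))
      \<Longrightarrow> 1 \<le> sum_list (map d (closed_loop (\<rho> (Suc n)) (loop_erasure (prefix \<rho> n))))"
      by (simp add: good_succ_def)
  qed
  with play cons show thesis using that by blast
qed

section \<open>Positional strategies for bounded sums\<close>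

definition bounded_from :: "('a \<times> 'a) set \<Rightarrow> ('a \<Rightarrow> 'a) \<Rightarrow> 'a \<Rightarrow> bool" where
  "bounded_from Ed \<pi> s \<longleftrightarrow>
     (\<forall>\<rho>. play Ed s \<rho> \<and> consistent A0 (\<lambda>h. \<pi> (last h)) \<rho> \<longrightarrow> bounded_sums d \<rho>)"

lemma bounded_from_restricts_at:
  assumes "restricts_at v Ed Ed'" "v \<in> A0" "(v, \<pi> v) \<in> Ed'" "bounded_from Ed' \<pi> s"
  shows "bounded_from Ed \<pi> s"
  unfolding bounded_from_def
proof (intro allI impI, elim conjE)
  fix \<rho> assume play: "play Ed s \<rho>" and cons: "consistent A0 (\<lambda>h. \<pi> (last h)) \<rho>"
  have "play Ed' s \<rho>"
  proof (rule play_restricts_at[OF assms(1) play])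
    fix n assume "\<rho> n = v"
    then show "(v, \<rho> (Suc n)) \<in> Ed'"
      using cons assms(2,3) by (simp add: consistent_positional_iff)
  qed
  with assms(4) cons show "bounded_sums d \<rho>"
    by (simp add: bounded_from_def)
qed

text \<open>Once \<open>v\<close> is on the stack it never returns to the top, since revisiting it ends the game.\<close>
lemma cycle_win_restricts_at_visited:
  assumes "cycle_win Ed q" "restricts_at v Ed Ed'"
  shows "v \<in> set q \<Longrightarrow> last q \<noteq> v \<Longrightarrow> cycle_win Ed' q"
  using assms(1)
proof (induction rule: cycle_win.induct)
  case (player0 p y)
  then have "(last p, y) \<in> Ed'" using assms(2) by (auto simp: restricts_at_def)
  moreover have "y \<noteq> v" if "y \<notin> set p" using player0.prems that by auto
  ultimately show ?case
    using player0 by (intro cycle_win.player0[where Ed=Ed' and p=p and y=y]) auto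
next
  case (player1 p)
  show ?case
  proof (rule cycle_win.player1[OF player1.hyps(1)], intro allI impI)
    fix y assume "(last p, y) \<in> Ed'"
    then show "y \<in> set p \<and> sum_list (map d (closed_loop y p)) \<le> 0 \<or> y \<notin> set p \<and> cycle_win Ed' (p @ [y])"
      using player1 assms(2) by (auto simp: restricts_at_def)
  qed
qed

lemma cycle_win_split_at:
  assumes "v \<in> A0" "cycle_win Ed [v]"
    and "restricts_at v Ed Ed1" "restricts_at v Ed Ed2"
    and "\<And>y. (v, y) \<in> Ed \<Longrightarrow> (v, y) \<in> Ed1 \<or> (v, y) \<in> Ed2"
  shows "cycle_win Ed1 [v] \<or> cycle_win Ed2 [v]"
proof -
  obtain y where y: "(v, y) \<in> Ed" "good_succ Ed [v] y"
    using assms(1,2) by (auto simp: cycle_win_iff[of Ed])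
  have "cycle_win Edi [v]" if "restricts_at v Ed Edi" "(v, y) \<in> Edi" for Edi
  proof -
    have "good_succ Edi [v] y"
      using y cycle_win_restricts_at_visited[OF _ that(1), where q="[v, y]"]
      by (auto simp: good_succ_def)
    then show ?thesis using assms(1) that(2) by (auto simp: cycle_win_iff[of Edi])
  qed
  then show ?thesis using assms(3-5) y(1) by blast
qed

lemma restricted_counterplay_visits:
  assumes graph: "game_graph S Ed" and graph': "game_graph S Ed'" and restr: "restricts_at v Ed Ed'"
    and s: "s \<in> S" and win: "cycle_win Ed [s]" and lose: "\<not> cycle_win Ed' [s]"
  obtains \<rho> k where "play Ed' s \<rho>"
    "consistent A0 (switch_at v (cycle_strategy Ed) (cycle_strategy Ed')) \<rho>"
    "sums_grow_linearly (card S) d \<rho>" "\<rho> k = v" "\<And>j. j < k \<Longrightarrow> \<rho> j \<noteq> v"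
proof -
  obtain \<rho> where play: "play Ed' s \<rho>"
    and cons: "consistent A0 (switch_at v (cycle_strategy Ed) (cycle_strategy Ed')) \<rho>"
    and grow: "sums_grow_linearly (card S) d \<rho>"
    by (rule growing_play_if_not_cycle_win[OF graph' s lose strategy_switch_at[OF
          strategy_cycle_strategy[OF graph] strategy_cycle_strategy[OF graph'] restr]])
  have "\<exists>k. \<rho> k = v"
  proof (rule ccontr)
    assume "\<nexists>k. \<rho> k = v"
    then have "consistent A0 (cycle_strategy Ed) \<rho>"
      using consistent_switch_at_unvisited[OF cons] by blast
    moreover have "play Ed s \<rho>"
      using play_mono[OF _ play] restr by (auto simp: restricts_at_def)
    ultimately show False
      using bounded_sums_cycle_strategy[OF graph s win] grow not_bounded_and_growing by blast
  qed
  then obtain k where "\<rho> k = v" "\<And>j. j < k \<Longrightarrow> \<rho> j \<noteq> v"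
    by (rule first_visit) blast
  with play cons grow show thesis by (rule that)
qed

text \<open>If \<open>v\<close> is still won after removing some of its edges, Player 0 may switch to the
  restricted game's cycle strategy on reaching \<open>v\<close>.\<close>
lemma cycle_win_restricts_at_if_winning:
  assumes graph: "game_graph S Ed" and graph': "game_graph S Ed'"
    and restr: "restricts_at v Ed Ed'" and v: "v \<in> S" and win_v: "cycle_win Ed' [v]"
    and s: "s \<in> S" and win_s: "cycle_win Ed [s]"
  shows "cycle_win Ed' [s]"
proof (rule ccontr)
  assume "\<not> cycle_win Ed' [s]"
  then obtain \<rho> k where play: "play Ed' s \<rho>"
    and cons: "consistent A0 (switch_at v (cycle_strategy Ed) (cycle_strategy Ed')) \<rho>"
    and grow: "sums_grow_linearly (card S) d \<rho>" and k: "\<rho> k = v" and "\<And>j. j < k \<Longrightarrow> \<rho> j \<noteq> v"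
    by (rule restricted_counterplay_visits[OF graph graph' restr s win_s]) blast
  then have "consistent A0 (cycle_strategy Ed') (\<lambda>i. \<rho> (i + k))"
    by (intro consistent_switch_at_after)
  then have "bounded_sums d (\<lambda>i. \<rho> (i + k))"
    using bounded_sums_cycle_strategy[OF graph' v win_v] play_suffix[OF play, of k] k by simp
  then show False
    using sums_grow_linearly_suffix[OF grow] not_bounded_and_growing by blast
qed

text \<open>If \<open>v\<close> is lost, a play reaching \<open>v\<close> can be continued into one with linearly growing
  sums, so Player 0's cycle strategy from a winning \<open>s\<close> never lets the play reach \<open>v\<close>.\<close>
lemma cycle_win_restricts_at_if_losing:
  assumes graph: "game_graph S Ed" and graph': "game_graph S Ed'"
    and restr: "restricts_at v Ed Ed'" and v: "v \<in> S" and lose_v: "\<not> cycle_win Ed [v]"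
    and s: "s \<in> S" and win_s: "cycle_win Ed [s]"
  shows "cycle_win Ed' [s]"
proof (rule ccontr)
  assume "\<not> cycle_win Ed' [s]"
  then obtain \<rho> k where play': "play Ed' s \<rho>"
    and cons: "consistent A0 (switch_at v (cycle_strategy Ed) (cycle_strategy Ed')) \<rho>"
    and k: "\<rho> k = v" and before: "\<And>j. j < k \<Longrightarrow> \<rho> j \<noteq> v"
    by (rule restricted_counterplay_visits[OF graph graph' restr s win_s]) blast
  have play: "play Ed s \<rho>"
    using play_mono[OF _ play'] restr by (auto simp: restricts_at_def)
  let ?\<sigma> = "\<lambda>h. cycle_strategy Ed (map \<rho> [0..<k] @ h)"
  have "strategy S A0 Ed ?\<sigma>"
    unfolding strategy_def
  proof (intro allI impI, elim conjE)
    fix h :: "'a list" assume "h \<noteq> []" "set h \<subseteq> S" "last h \<in> A0"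
    moreover have "set (map \<rho> [0..<k]) \<subseteq> S"
      using play_in_graph[OF graph s play] by auto
    ultimately show "(last h, ?\<sigma> h) \<in> Ed"
      using strategy_cycle_strategy[OF graph] unfolding strategy_def
      by (metis Nil_is_append_conv last_appendR set_append Un_subset_iff)
  qed
  then obtain \<rho>' where play_v: "play Ed v \<rho>'" and cons_v: "consistent A0 ?\<sigma> \<rho>'"
    and grow: "sums_grow_linearly (card S) d \<rho>'"
    using growing_play_if_not_cycle_win[OF graph v lose_v] by blast
  have "play Ed s (splice_play k \<rho> \<rho>')"
    by (rule play_splice_play) (use play play_v k in \<open>simp_all add: play_def\<close>)
  moreover have "consistent A0 (cycle_strategy Ed) (splice_play k \<rho> \<rho>')"
    by (rule consistent_splice_play[OF _ consistent_switch_at_before[OF cons before] cons_v])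
       (use play_v k in \<open>simp add: play_def\<close>)
  ultimately have "bounded_sums d (splice_play k \<rho> \<rho>')"
    using bounded_sums_cycle_strategy[OF graph s win_s] by blast
  then have "bounded_sums d \<rho>'"
    using bounded_sums_suffix_iff[of d "splice_play k \<rho> \<rho>'" k] by simp
  then show False using grow not_bounded_and_growing by blast
qed

lemma positional_of_restricts_at:
  assumes "restricts_at v Ed Ed'" "v \<in> A0"
    and "\<forall>u\<in>A0. (u, \<pi> u) \<in> Ed'" "\<forall>s\<in>S. cycle_win Ed' [s] \<longrightarrow> bounded_from Ed' \<pi> s"
    and "\<forall>s\<in>S. cycle_win Ed [s] \<longrightarrow> cycle_win Ed' [s]"
  shows "(\<forall>u\<in>A0. (u, \<pi> u) \<in> Ed) \<and> (\<forall>s\<in>S. cycle_win Ed [s] \<longrightarrow> bounded_from Ed \<pi> s)"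
  using assms bounded_from_restricts_at[OF assms(1,2)] by (auto simp: restricts_at_def)

lemma positional_cycle_strategy_unique_moves:
  assumes graph: "game_graph S Ed"
    and unique: "\<And>v y1 y2. v \<in> A0 \<Longrightarrow> (v, y1) \<in> Ed \<Longrightarrow> (v, y2) \<in> Ed \<Longrightarrow> y1 = y2"
  shows "\<exists>\<pi>. (\<forall>u\<in>A0. (u, \<pi> u) \<in> Ed) \<and> (\<forall>s\<in>S. cycle_win Ed [s] \<longrightarrow> bounded_from Ed \<pi> s)"
proof (intro exI conjI ballI impI)
  define \<pi> where "\<pi> = choose_succ Ed (\<lambda>_. True)"
  show legal: "(u, \<pi> u) \<in> Ed" if "u \<in> A0" for u
    using graph A0_subset that by (auto simp: \<pi>_def elim!: game_graph_succ intro: choose_succ_in_edges)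
  fix s assume s: "s \<in> S" and win: "cycle_win Ed [s]"
  show "bounded_from Ed \<pi> s"
    unfolding bounded_from_def
  proof (intro allI impI, elim conjE)
    fix \<rho> assume play: "play Ed s \<rho>" and cons: "consistent A0 (\<lambda>h. \<pi> (last h)) \<rho>"
    have "consistent A0 (cycle_strategy Ed) \<rho>"
      unfolding consistent_def
    proof (intro allI impI)
      fix n assume "\<rho> n \<in> A0"
      moreover have "set (prefix \<rho> n) \<subseteq> S"
        using play_in_graph[OF graph s play] by (auto simp: set_prefix)
      ultimately have "(\<rho> n, cycle_strategy Ed (prefix \<rho> n)) \<in> Ed"
        using strategy_move[OF strategy_cycle_strategy[OF graph]] by blast
      with \<open>\<rho> n \<in> A0\<close> show "\<rho> (Suc n) = cycle_strategy Ed (prefix \<rho> n)"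
        using legal unique cons by (metis consistent_positional_iff)
    qed
    with bounded_sums_cycle_strategy[OF graph s win play] show "bounded_sums d \<rho>" .
  qed
qed

text \<open>One of the two restrictions keeps every winning start winning: if \<open>v\<close> is won in either
  one, that one; otherwise \<open>v\<close> is lost, and then removing edges at \<open>v\<close> is harmless.\<close>
lemma cycle_win_restricts_at_one:
  assumes graph: "game_graph S Ed" and graph1: "game_graph S Ed1" and graph2: "game_graph S Ed2"
    and v: "v \<in> A0" and restr1: "restricts_at v Ed Ed1" and restr2: "restricts_at v Ed Ed2"
    and cover: "\<And>y. (v, y) \<in> Ed \<Longrightarrow> (v, y) \<in> Ed1 \<or> (v, y) \<in> Ed2"
  shows "\<exists>Ed'\<in>{Ed1, Ed2}. \<forall>s\<in>S. cycle_win Ed [s] \<longrightarrow> cycle_win Ed' [s]"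
proof -
  have v_S: "v \<in> S" using v A0_subset by blast
  consider "cycle_win Ed1 [v]" | "cycle_win Ed2 [v]" | "\<not> cycle_win Ed [v]"
    using cycle_win_split_at[OF v _ restr1 restr2 cover] by blast
  then show ?thesis
  proof cases
    case 1
    then show ?thesis using cycle_win_restricts_at_if_winning[OF graph graph1 restr1 v_S] by blast
  next
    case 2
    then show ?thesis using cycle_win_restricts_at_if_winning[OF graph graph2 restr2 v_S] by blast
  next
    case 3
    then show ?thesis using cycle_win_restricts_at_if_losing[OF graph graph1 restr1 v_S] by blast
  qed
qed

lemma positional_cycle_strategy:
  assumes "game_graph S Ed"
  shows "\<exists>\<pi>. (\<forall>u\<in>A0. (u, \<pi> u) \<in> Ed) \<and> (\<forall>s\<in>S. cycle_win Ed [s] \<longrightarrow> bounded_from Ed \<pi> s)"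
  using assms
proof (induction "card (Ed \<inter> A0 \<times> UNIV)" arbitrary: Ed rule: less_induct)
  case less
  note graph = less.prems
  show ?case
  proof (cases "\<exists>v\<in>A0. \<exists>y1 y2. (v, y1) \<in> Ed \<and> (v, y2) \<in> Ed \<and> y1 \<noteq> y2")
    case False
    then show ?thesis using positional_cycle_strategy_unique_moves[OF graph] by blast
  next
    case True
    then obtain v y1 y2 where v: "v \<in> A0" and e1: "(v, y1) \<in> Ed" and e2: "(v, y2) \<in> Ed"
      and "y1 \<noteq> y2" by blast
    define Ed1 where "Ed1 = Ed - {(v, y1)}"
    define Ed2 where "Ed2 = Ed - {(v, y) | y. y \<noteq> y1}"
    have restr: "restricts_at v Ed Ed1" "restricts_at v Ed Ed2"
      by (auto simp: restricts_at_def Ed1_def Ed2_def)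
    have graphs: "game_graph S Ed1" "game_graph S Ed2"
      using graph e1 e2 \<open>y1 \<noteq> y2\<close> by (auto simp: game_graph_def Ed1_def Ed2_def)
    have fin: "finite (Ed \<inter> A0 \<times> UNIV)"
      using graph finite_S by (auto simp: game_graph_def intro: finite_subset[of _ "S \<times> S"])
    have "card (Ed1 \<inter> A0 \<times> UNIV) < card (Ed \<inter> A0 \<times> UNIV)"
      "card (Ed2 \<inter> A0 \<times> UNIV) < card (Ed \<inter> A0 \<times> UNIV)"
      using v e1 e2 \<open>y1 \<noteq> y2\<close> by (auto simp: Ed1_def Ed2_def intro!: psubset_card_mono[OF fin])
    then have IH: "\<exists>\<pi>. (\<forall>u\<in>A0. (u, \<pi> u) \<in> Ed') \<and> (\<forall>s\<in>S. cycle_win Ed' [s] \<longrightarrow> bounded_from Ed' \<pi> s)"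
      if "Ed' \<in> {Ed1, Ed2}" for Ed'
      using less.hyps graphs that by blast
    have cover: "(v, y) \<in> Ed1 \<or> (v, y) \<in> Ed2" if "(v, y) \<in> Ed" for y
      using that by (auto simp: Ed1_def Ed2_def)
    obtain Ed' where Ed': "Ed' \<in> {Ed1, Ed2}"
      and preserved: "\<forall>s\<in>S. cycle_win Ed [s] \<longrightarrow> cycle_win Ed' [s]"
      using cycle_win_restricts_at_one[OF graph graphs v restr cover] by blast
    obtain \<pi> where legal: "\<forall>u\<in>A0. (u, \<pi> u) \<in> Ed'"
      and bounded: "\<forall>s\<in>S. cycle_win Ed' [s] \<longrightarrow> bounded_from Ed' \<pi> s"
      using IH[OF Ed'] by blast
    have "restricts_at v Ed Ed'" using Ed' restr by blast
    from positional_of_restricts_at[OF this v legal bounded preserved] show ?thesis by blast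
  qed
qed

theorem positional_bounded_strategy:
  assumes graph: "game_graph S Ed" and s: "s \<in> S" and \<sigma>: "strategy S A0 Ed \<sigma>"
    and not_growing: "\<And>\<rho>. play Ed s \<rho> \<Longrightarrow> consistent A0 \<sigma> \<rho> \<Longrightarrow> \<not> sums_grow_linearly (card S) d \<rho>"
  obtains \<pi> where "\<forall>u\<in>A0. (u, \<pi> u) \<in> Ed" "bounded_from Ed \<pi> s"
proof -
  have "cycle_win Ed [s]"
    using growing_play_if_not_cycle_win[OF graph s _ \<sigma>] not_growing by metis
  then show thesis
    using positional_cycle_strategy[OF graph] s that by blast
qed

end

section \<open>Energy levels\<close>

lemma edges_singleton [simp]: "edges [x] = []"
  by (simp add: edges_def)

lemma edges_snoc: "zs \<noteq> [] \<Longrightarrow> edges (zs @ [y]) = edges zs @ [(last zs, y)]"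
  by (induction zs rule: induct_list012) (simp_all add: edges_def)

lemma no_recharge_short: "length zs \<le> 1 \<Longrightarrow> no_recharge w zs"
  by (cases zs) (auto simp: no_recharge_def edges_def)

lemma no_recharge_snoc:
  "zs \<noteq> [] \<Longrightarrow> no_recharge w (zs @ [y]) \<longleftrightarrow> no_recharge w zs \<and> w (last zs, y) \<noteq> Rch"
  by (auto simp: no_recharge_def edges_snoc)

lemma EL_cap_singleton: "EL_cap w cap [x] = int cap"
proof -
  have "(LEAST k. no_recharge w (drop k [x])) = 0"
    by (rule Least_equality) (auto simp: no_recharge_short)
  then show ?thesis by (simp add: EL_cap_def EL_def)
qed

lemma EL_cap_snoc:
  assumes "xs \<noteq> []"
  shows "EL_cap w cap (xs @ [y]) =
           (case w (last xs, y) of Rch \<Rightarrow> int cap | Wt k \<Rightarrow> EL_cap w cap xs + k)"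
proof -
  have drop_snoc: "drop k (xs @ [y]) = drop k xs @ [y]" "drop k xs \<noteq> []"
    "last (drop k xs) = last xs" if "k < length xs" for k
    using that by auto
  show ?thesis
  proof (cases "w (last xs, y)")
    case Rch
    have "(LEAST k. no_recharge w (drop k (xs @ [y]))) = length xs"
    proof (rule Least_equality)
      show "no_recharge w (drop (length xs) (xs @ [y]))" by (simp add: no_recharge_short)
      show "length xs \<le> k" if "no_recharge w (drop k (xs @ [y]))" for k
        using that Rch drop_snoc[of k] no_recharge_snoc[of "drop k xs" w y] by (cases "k < length xs") auto
    qed
    then show ?thesis using Rch by (simp add: EL_cap_def EL_def)
  next
    case (Wt k0)
    have same: "no_recharge w (drop k (xs @ [y])) \<longleftrightarrow> no_recharge w (drop k xs)" for k
      using Wt drop_snoc[of k] no_recharge_snoc[of "drop k xs" w y]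
      by (cases "k < length xs") (simp_all add: no_recharge_short)
    define L where "L = (LEAST k. no_recharge w (drop k xs))"
    have "L \<le> length xs - 1"
      unfolding L_def by (rule Least_le) (simp add: no_recharge_short)
    then have "L < length xs" using assms by (cases xs) auto
    then have "EL w (drop L (xs @ [y])) = EL w (drop L xs) + k0"
      using drop_snoc[of L] Wt by (simp add: EL_def edges_snoc)
    moreover have "EL_cap w cap (xs @ [y]) = int cap + EL w (drop L (xs @ [y]))"
      by (simp only: EL_cap_def same L_def)
    moreover have "EL_cap w cap xs = int cap + EL w (drop L xs)"
      by (simp only: EL_cap_def L_def)
    ultimately show ?thesis using Wt by simp
  qed
qed

lemma EL_cap_prefix_Suc:
  "EL_cap w cap (prefix \<rho> (Suc n)) =
     (case w (\<rho> n, \<rho> (Suc n)) of Rch \<Rightarrow> int cap | Wt k \<Rightarrow> EL_cap w cap (prefix \<rho> n) + k)"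
  using EL_cap_snoc[of "prefix \<rho> n" w cap "\<rho> (Suc n)"] by simp

lemma EL_cap_prefix_le:
  assumes "recharge_weight E w" "\<And>n. (\<rho> n, \<rho> (Suc n)) \<in> E"
  shows "EL_cap w cap (prefix \<rho> n) \<le> int cap"
proof (induction n)
  case 0
  then show ?case by (simp add: EL_cap_singleton)
next
  case (Suc n)
  have "\<forall>k. w (\<rho> n, \<rho> (Suc n)) = Wt k \<longrightarrow> k \<le> 0"
    using assms by (auto simp: recharge_weight_def)
  with Suc show ?case
    unfolding EL_cap_prefix_Suc by (auto split: rweight.split)
qed

text \<open>Memory \<open>m \<le> cap\<close> stores the current energy level; \<open>cap + 1\<close> is a sink recording that the
  energy has dropped below zero.\<close>
definition recharge_update :: "('v \<times> 'v \<Rightarrow> rweight) \<Rightarrow> nat \<Rightarrow> nat \<Rightarrow> 'v \<times> 'v \<Rightarrow> nat" where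
  "recharge_update w cap m e =
     (if cap < m then Suc cap
      else case w e of
        Rch \<Rightarrow> cap
      | Wt k \<Rightarrow> if 0 \<le> int m + k \<and> int m + k \<le> int cap then nat (int m + k) else Suc cap)"

lemma upd_plus_snoc [simp]:
  "xs \<noteq> [] \<Longrightarrow> upd_plus mI Upd (xs @ [y]) = Upd (upd_plus mI Upd xs) (last xs, y)"
  by (simp add: upd_plus_def edges_snoc)

lemma upd_plus_singleton [simp]: "upd_plus mI Upd [x] = mI"
  by (simp add: upd_plus_def)

lemma upd_plus_prefix_Suc:
  "upd_plus mI Upd (prefix \<rho> (Suc n)) = Upd (upd_plus mI Upd (prefix \<rho> n)) (\<rho> n, \<rho> (Suc n))"
  by (simp add: upd_plus_def edges_snoc)

lemma recharge_update_le: "recharge_update w cap m e \<le> Suc cap"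
  by (auto simp: recharge_update_def split: rweight.split)

lemma upd_plus_recharge_update_le: "upd_plus cap (recharge_update w cap) xs \<le> Suc cap"
proof -
  have "foldl (recharge_update w cap) m es \<le> Suc cap" if "m \<le> Suc cap" for m es
    using that by (induction es arbitrary: m) (simp_all add: recharge_update_le)
  then show ?thesis by (simp add: upd_plus_def)
qed

lemma upd_plus_recharge_update_prefix:
  assumes weights: "recharge_weight E w" and edges: "\<And>n. (\<rho> n, \<rho> (Suc n)) \<in> E"
  shows "upd_plus cap (recharge_update w cap) (prefix \<rho> n) =
           (if \<forall>j\<le>n. 0 \<le> EL_cap w cap (prefix \<rho> j) then nat (EL_cap w cap (prefix \<rho> n)) else Suc cap)"
proof (induction n)
  case 0
  then show ?case by (simp add: upd_plus_def EL_cap_singleton)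
next
  case (Suc n)
  let ?EL = "\<lambda>n. EL_cap w cap (prefix \<rho> n)"
  have all_Suc: "(\<forall>j\<le>Suc n. 0 \<le> ?EL j) \<longleftrightarrow> (\<forall>j\<le>n. 0 \<le> ?EL j) \<and> 0 \<le> ?EL (Suc n)"
    by (auto simp: le_Suc_eq)
  have nonpos: "k \<le> 0" if "w (\<rho> n, \<rho> (Suc n)) = Wt k" for k
    using weights edges[of n] that by (auto simp: recharge_weight_def)
  show ?case
  proof (cases "\<forall>j\<le>n. 0 \<le> ?EL j")
    case True
    then have "0 \<le> ?EL n" by simp
    moreover have "?EL n \<le> int cap" by (rule EL_cap_prefix_le[where \<rho>=\<rho>, OF weights edges])
    moreover have "upd_plus cap (recharge_update w cap) (prefix \<rho> n) = nat (?EL n)"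
      using Suc.IH True by simp
    ultimately show ?thesis
      using True nonpos
      unfolding upd_plus_prefix_Suc all_Suc EL_cap_prefix_Suc
      by (auto simp: recharge_update_def split: rweight.split)
  next
    case False
    then have "upd_plus cap (recharge_update w cap) (prefix \<rho> n) = Suc cap"
      using Suc.IH by (simp only: if_False)
    with False show ?thesis
      unfolding upd_plus_prefix_Suc all_Suc by (auto simp: recharge_update_def)
  qed
qed

lemma limsup_mean_le:
  fixes f :: "nat \<Rightarrow> real"
  assumes "\<And>n. (\<Sum>i<n. f i) \<le> real n * t + K"
  shows "limsup (\<lambda>n. ereal ((\<Sum>i<n. f i) / real n)) \<le> ereal t"
proof -
  define K' where "K' = max K 0"
  have "eventually (\<lambda>n. ereal ((\<Sum>i<n. f i) / real n) \<le> ereal (t + K' / real n)) sequentially"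
    using eventually_ge_at_top[of "1::nat"]
  proof eventually_elim
    case (elim n)
    then have n: "real n > 0" by simp
    have "(\<Sum>i<n. f i) \<le> real n * t + K'" using assms[of n] unfolding K'_def by linarith
    then have "(\<Sum>i<n. f i) / real n \<le> (real n * t + K') / real n"
      using n by (simp add: divide_right_mono)
    also have "\<dots> = t + K' / real n" using n by (simp add: field_simps)
    finally show ?case by simp
  qed
  then have "limsup (\<lambda>n. ereal ((\<Sum>i<n. f i) / real n)) \<le> limsup (\<lambda>n. ereal (t + K' / real n))"
    by (rule Limsup_mono)
  also have "\<dots> = ereal t"
  proof (rule lim_imp_Limsup)
    have "(\<lambda>n. t + K' / real n) \<longlonglongrightarrow> t + 0"
      by (intro tendsto_add tendsto_const lim_const_over_n)
    then show "(\<lambda>n. ereal (t + K' / real n)) \<longlonglongrightarrow> ereal t" by (simp add: tendsto_ereal)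
  qed simp
  finally show ?thesis .
qed

lemma limsup_mean_gt:
  fixes f :: "nat \<Rightarrow> real"
  assumes N: "N > 0" and grow: "\<And>n. real n \<le> N * ((\<Sum>i<n. f i) - real n * t) + K"
  shows "ereal t < limsup (\<lambda>n. ereal ((\<Sum>i<n. f i) / real n))"
proof -
  have "eventually (\<lambda>n. ereal (t + 1 / (2 * N)) \<le> ereal ((\<Sum>i<n. f i) / real n)) sequentially"
    using eventually_ge_at_top[of "nat \<lceil>2 * \<bar>K\<bar>\<rceil> + 1"]
  proof eventually_elim
    case (elim n)
    then have n: "real n \<ge> 2 * \<bar>K\<bar> + 1"
      by (smt (verit) of_nat_1 of_nat_add of_nat_ceiling of_nat_mono)
    then have "real n / 2 \<le> N * ((\<Sum>i<n. f i) - real n * t)" using grow[of n] by linarith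
    then have "real n * (t + 1 / (2 * N)) \<le> (\<Sum>i<n. f i)"
      using N by (simp add: field_simps)
    then show ?case using n by (simp add: field_simps)
  qed
  then have "ereal (t + 1 / (2 * N)) \<le> limsup (\<lambda>n. ereal ((\<Sum>i<n. f i) / real n))"
    by (intro le_Limsup) simp_all
  moreover have "ereal t < ereal (t + 1 / (2 * N))" using N by simp
  ultimately show ?thesis by order
qed

section \<open>The product with the energy memory\<close>

locale recharge_arena =
  fixes V V0 :: "'v set" and E :: "('v \<times> 'v) set" and vI :: 'v
    and w :: "'v \<times> 'v \<Rightarrow> rweight" and cap t :: nat
  assumes arena: "arena V V0 E vI" and weights: "recharge_weight E w"
begin

abbreviation upd :: "nat \<Rightarrow> 'v \<times> 'v \<Rightarrow> nat" where
  "upd \<equiv> recharge_update w cap"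

definition Mem :: "nat set" where
  "Mem = {0..Suc cap}"

definition product_edges :: "(('v \<times> nat) \<times> ('v \<times> nat)) set" where
  "product_edges = {((u, m), (u', upd m (u, u'))) | u m u'. (u, u') \<in> E \<and> m \<in> Mem}"

text \<open>Bounded partial sums of \<open>product_weight\<close> say that the running average of the energy level
  stays at most \<open>t\<close>; the sink weighs \<open>1\<close>, so once the energy has dropped below zero the sums
  grow linearly.\<close>
definition product_weight :: "'v \<times> nat \<Rightarrow> int" where
  "product_weight p = (if snd p \<le> cap then int (snd p) - int t else 1)"

definition lift_play :: "(nat \<Rightarrow> 'v) \<Rightarrow> nat \<Rightarrow> 'v \<times> nat" where
  "lift_play \<rho> n = (\<rho> n, upd_plus cap upd (prefix \<rho> n))"

lemma card_Mem: "card Mem = cap + 2"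
  by (simp add: Mem_def)

lemma upd_plus_in_Mem: "upd_plus cap upd xs \<in> Mem"
  using upd_plus_recharge_update_le by (simp add: Mem_def)

lemma memory_structure_Mem: "memory_structure E Mem cap upd"
  by (simp add: memory_structure_def Mem_def recharge_update_le)

sublocale product: bounded_sum_game "V \<times> Mem" "V0 \<times> Mem" product_weight
  using arena by unfold_locales (auto simp: arena_def Mem_def)

lemma product_edges_iff:
  "((u, m), (u', m')) \<in> product_edges \<longleftrightarrow> (u, u') \<in> E \<and> m \<in> Mem \<and> m' = upd m (u, u')"
  by (auto simp: product_edges_def)

lemma game_graph_product: "game_graph (V \<times> Mem) product_edges"
  using arena recharge_update_le by (fastforce simp: game_graph_def arena_def product_edges_def Mem_def)

lemma play_lift_play: "play E vI \<rho> \<Longrightarrow> play product_edges (vI, cap) (lift_play \<rho>)"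
  by (simp add: play_def lift_play_def product_edges_iff upd_plus_in_Mem)

lemma product_play_eq_lift_play:
  assumes "play product_edges (vI, cap) \<rho>P"
  shows "play E vI (\<lambda>n. fst (\<rho>P n))" and "\<rho>P = lift_play (\<lambda>n. fst (\<rho>P n))"
proof -
  have edge: "(fst (\<rho>P n), fst (\<rho>P (Suc n))) \<in> E \<and>
      snd (\<rho>P (Suc n)) = upd (snd (\<rho>P n)) (fst (\<rho>P n), fst (\<rho>P (Suc n)))" for n
    using assms product_edges_iff[of "fst (\<rho>P n)" "snd (\<rho>P n)" "fst (\<rho>P (Suc n))" "snd (\<rho>P (Suc n))"]
    by (simp add: play_def)
  then show "play E vI (\<lambda>n. fst (\<rho>P n))"
    using assms by (simp add: play_def)
  have "\<rho>P n = lift_play (\<lambda>n. fst (\<rho>P n)) n" for n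
  proof (induction n)
    case 0
    then show ?case using assms by (simp add: play_def lift_play_def upd_plus_def)
  next
    case (Suc n)
    then show ?case using edge[of n]
      by (simp add: lift_play_def upd_plus_prefix_Suc prod_eq_iff)
  qed
  then show "\<rho>P = lift_play (\<lambda>n. fst (\<rho>P n))" ..
qed

lemma product_weight_lift_play:
  assumes "play E vI \<rho>"
  shows "product_weight (lift_play \<rho> n) =
           (if \<forall>j\<le>n. 0 \<le> EL_cap w cap (prefix \<rho> j) then EL_cap w cap (prefix \<rho> n) - int t else 1)"
proof -
  have edges: "\<And>n. (\<rho> n, \<rho> (Suc n)) \<in> E" using assms by (simp add: play_def)
  show ?thesis
    using upd_plus_recharge_update_prefix[where \<rho>=\<rho>, OF weights edges, of cap n]
      EL_cap_prefix_le[where \<rho>=\<rho>, OF weights edges, of cap n]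
    by (auto simp: product_weight_def lift_play_def)
qed

lemma sum_product_weight_lift_play:
  assumes "play E vI \<rho>" "\<And>n. 0 \<le> EL_cap w cap (prefix \<rho> n)"
  shows "(\<Sum>i<n. product_weight (lift_play \<rho> i))
           = (\<Sum>i<n. EL_cap w cap (prefix \<rho> i)) - int n * int t"
  using assms by (simp add: product_weight_lift_play sum_subtractf)

lemma avg_recharge_if_bounded_sums:
  assumes play: "play E vI \<rho>" and bounded: "bounded_sums product_weight (lift_play \<rho>)"
  shows "\<rho> \<in> AvgRecharge w cap t"
proof -
  have recharge: "0 \<le> EL_cap w cap (prefix \<rho> n)" for n
  proof (rule ccontr)
    assume "\<not> 0 \<le> EL_cap w cap (prefix \<rho> n)"
    then have "product_weight (lift_play \<rho> (i + n)) = 1" for i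
      using product_weight_lift_play[OF play, of "i + n"] by auto
    moreover obtain K where "\<And>m. (\<Sum>i<m. product_weight (lift_play \<rho> (i + n))) \<le> K"
      using bounded bounded_sums_suffix_iff[of product_weight "lift_play \<rho>" n]
      by (auto simp: bounded_sums_def)
    ultimately have "int m \<le> K" for m by simp
    from this[of "nat K + 1"] show False by linarith
  qed
  obtain K where K: "\<And>n. (\<Sum>i<n. product_weight (lift_play \<rho> i)) \<le> K"
    using bounded by (auto simp: bounded_sums_def)
  have "(\<Sum>i<n. real_of_int (EL_cap w cap (prefix \<rho> i))) \<le> real n * real t + real_of_int K" for n
  proof -
    have "(\<Sum>i<n. EL_cap w cap (prefix \<rho> i)) \<le> int n * int t + K"
      using K[of n] sum_product_weight_lift_play[OF play recharge, of n] by linarith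
    then have "real_of_int (\<Sum>i<n. EL_cap w cap (prefix \<rho> i)) \<le> real_of_int (int n * int t + K)"
      by (simp only: of_int_le_iff)
    then show ?thesis by simp
  qed
  then have "limsup (\<lambda>n. ereal ((\<Sum>i<n. real_of_int (EL_cap w cap (prefix \<rho> i))) / real n))
               \<le> ereal (real t)"
    by (rule limsup_mean_le)
  with recharge show ?thesis
    by (simp add: AvgRecharge_def Recharge_def)
qed

lemma not_growing_if_avg_recharge:
  assumes play: "play E vI \<rho>" and avg: "\<rho> \<in> AvgRecharge w cap t" and "0 < N"
  shows "\<not> sums_grow_linearly N product_weight (lift_play \<rho>)"
proof
  assume "sums_grow_linearly N product_weight (lift_play \<rho>)"
  then obtain K where K: "\<And>n. int n \<le> int N * (\<Sum>i<n. product_weight (lift_play \<rho> i)) + K"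
    by (auto simp: sums_grow_linearly_def)
  have recharge: "0 \<le> EL_cap w cap (prefix \<rho> n)" for n
    using avg by (simp add: AvgRecharge_def Recharge_def)
  define f where "f i = real_of_int (EL_cap w cap (prefix \<rho> i))" for i
  have "real n \<le> real N * ((\<Sum>i<n. f i) - real n * real t) + real_of_int K" for n
  proof -
    have "int n \<le> int N * ((\<Sum>i<n. EL_cap w cap (prefix \<rho> i)) - int n * int t) + K"
      using K[of n] sum_product_weight_lift_play[OF play recharge, of n] by simp
    then have "real_of_int (int n)
                 \<le> real_of_int (int N * ((\<Sum>i<n. EL_cap w cap (prefix \<rho> i)) - int n * int t) + K)"
      by (simp only: of_int_le_iff)
    then show ?thesis by (simp add: f_def)
  qed
  then have "ereal (real t) < limsup (\<lambda>n. ereal ((\<Sum>i<n. f i) / real n))"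
    using \<open>0 < N\<close> by (intro limsup_mean_gt[where N = "real N" and K = "real_of_int K"]) simp_all
  moreover have "limsup (\<lambda>n. ereal ((\<Sum>i<n. f i) / real n)) \<le> ereal (real t)"
    using avg by (simp add: AvgRecharge_def f_def)
  ultimately show False by simp
qed

definition product_strategy :: "('v list \<Rightarrow> 'v) \<Rightarrow> ('v \<times> nat) list \<Rightarrow> 'v \<times> nat" where
  "product_strategy \<sigma> h = (\<sigma> (map fst h), upd (snd (last h)) (fst (last h), \<sigma> (map fst h)))"

lemma strategy_product_strategy:
  assumes "strategy V V0 E \<sigma>"
  shows "strategy (V \<times> Mem) (V0 \<times> Mem) product_edges (product_strategy \<sigma>)"
  unfolding strategy_def
proof (intro allI impI, elim conjE)
  fix h :: "('v \<times> nat) list" assume h: "h \<noteq> []" "set h \<subseteq> V \<times> Mem" "last h \<in> V0 \<times> Mem"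
  then have "map fst h \<noteq> []" "set (map fst h) \<subseteq> V" "last (map fst h) \<in> V0"
    by (auto simp: last_map)
  then have "(last (map fst h), \<sigma> (map fst h)) \<in> E"
    using assms by (simp add: strategy_def)
  with h show "(last h, product_strategy \<sigma> h) \<in> product_edges"
    by (cases "last h") (auto simp: product_strategy_def product_edges_iff last_map)
qed

lemma consistent_product_strategy:
  assumes "play product_edges (vI, cap) \<rho>P" "consistent (V0 \<times> Mem) (product_strategy \<sigma>) \<rho>P"
  shows "consistent V0 \<sigma> (\<lambda>n. fst (\<rho>P n))"
  unfolding consistent_def
proof (intro allI impI)
  fix n assume "fst (\<rho>P n) \<in> V0"
  moreover have "snd (\<rho>P n) \<in> Mem"
    using product_play_eq_lift_play(2)[OF assms(1)] upd_plus_in_Mem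
    by (metis lift_play_def snd_conv)
  ultimately have "\<rho>P (Suc n) = product_strategy \<sigma> (prefix \<rho>P n)"
    using assms(2) by (simp add: consistent_def mem_Times_iff)
  then show "fst (\<rho>P (Suc n)) = \<sigma> (prefix (\<lambda>n. fst (\<rho>P n)) n)"
    by (simp add: product_strategy_def prefix_def comp_def)
qed

lemma positional_product_strategy:
  assumes "wins V V0 E vI (AvgRecharge w cap t)"
  obtains \<pi> where "\<forall>u\<in>V0 \<times> Mem. (u, \<pi> u) \<in> product_edges"
    "product.bounded_from product_edges \<pi> (vI, cap)"
proof -
  obtain \<sigma> where \<sigma>: "strategy V V0 E \<sigma>"
    and win: "\<And>\<rho>. play E vI \<rho> \<Longrightarrow> consistent V0 \<sigma> \<rho> \<Longrightarrow> \<rho> \<in> AvgRecharge w cap t"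
    using assms by (auto simp: wins_def wins_with_def)
  have start: "(vI, cap) \<in> V \<times> Mem" using arena by (simp add: arena_def Mem_def)
  then have "0 < card (V \<times> Mem)" using product.finite_S card_gt_0_iff by blast
  show thesis
  proof (rule product.positional_bounded_strategy[OF game_graph_product start
        strategy_product_strategy[OF \<sigma>]])
    fix \<rho>P
    assume "play product_edges (vI, cap) \<rho>P" "consistent (V0 \<times> Mem) (product_strategy \<sigma>) \<rho>P"
    with \<open>0 < card (V \<times> Mem)\<close> show "\<not> sums_grow_linearly (card (V \<times> Mem)) product_weight \<rho>P"
      using win not_growing_if_avg_recharge product_play_eq_lift_play consistent_product_strategy by metis
  qed (use that in blast)
qed

definition memory_next :: "('v \<times> nat \<Rightarrow> 'v \<times> nat) \<Rightarrow> 'v \<Rightarrow> nat \<Rightarrow> 'v" where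
  "memory_next \<pi> u m = fst (\<pi> (u, m))"

lemma next_move_memory_next:
  assumes "\<forall>u\<in>V0 \<times> Mem. (u, \<pi> u) \<in> product_edges"
  shows "next_move V0 E Mem (memory_next \<pi>)"
  unfolding next_move_def memory_next_def using assms by (force simp: product_edges_def)

lemma wins_with_memory_next:
  assumes legal: "\<forall>u\<in>V0 \<times> Mem. (u, \<pi> u) \<in> product_edges"
    and bounded: "product.bounded_from product_edges \<pi> (vI, cap)"
  shows "wins_with V V0 E vI (AvgRecharge w cap t) (induced_strategy cap upd (memory_next \<pi>))"
  unfolding wins_with_def
proof (intro conjI allI impI)
  show "strategy V V0 E (induced_strategy cap upd (memory_next \<pi>))"
    using next_move_memory_next[OF legal] upd_plus_in_Mem
    by (auto simp: strategy_def induced_strategy_def next_move_def)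
  fix \<rho> assume "play E vI \<rho> \<and> consistent V0 (induced_strategy cap upd (memory_next \<pi>)) \<rho>"
  then have play: "play E vI \<rho>" and cons: "consistent V0 (induced_strategy cap upd (memory_next \<pi>)) \<rho>"
    by blast+
  have "consistent (V0 \<times> Mem) (\<lambda>h. \<pi> (last h)) (lift_play \<rho>)"
    unfolding consistent_positional_iff
  proof (intro allI impI)
    fix n assume "lift_play \<rho> n \<in> V0 \<times> Mem"
    then have "((\<rho> n, upd_plus cap upd (prefix \<rho> n)), \<pi> (lift_play \<rho> n)) \<in> product_edges"
      using legal by (auto simp: lift_play_def)
    moreover have "\<rho> (Suc n) = fst (\<pi> (lift_play \<rho> n))"
      using cons \<open>lift_play \<rho> n \<in> V0 \<times> Mem\<close>
      by (simp add: consistent_def induced_strategy_def memory_next_def lift_play_def)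
    ultimately show "lift_play \<rho> (Suc n) = \<pi> (lift_play \<rho> n)"
      by (cases "\<pi> (lift_play \<rho> n)") (simp add: product_edges_iff lift_play_def)
  qed
  then have "bounded_sums product_weight (lift_play \<rho>)"
    using bounded play_lift_play[OF play] by (simp add: product.bounded_from_def)
  then show "\<rho> \<in> AvgRecharge w cap t" by (rule avg_recharge_if_bounded_sums[OF play])
qed

end

theorem corollary1:
  fixes V V0 :: "'v set" and E :: "('v \<times> 'v) set" and vI :: 'v
    and w :: "'v \<times> 'v \<Rightarrow> rweight" and cap t :: nat
  assumes "arena V V0 E vI"
    and "recharge_weight E w"
    and "wins V V0 E vI (AvgRecharge w cap t)"
  shows "\<exists>(M :: nat set) mI Upd Nxt.
           memory_structure E M mI Upd \<and> card M = cap + 2 \<and> next_move V0 E M Nxt \<and>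
           wins_with V V0 E vI (AvgRecharge w cap t) (induced_strategy mI Upd Nxt)"
proof -
  interpret recharge_arena V V0 E vI w cap t
    using assms(1,2) by unfold_locales
  obtain \<pi> where "\<forall>u\<in>V0 \<times> Mem. (u, \<pi> u) \<in> product_edges"
    and "product.bounded_from product_edges \<pi> (vI, cap)"
    using positional_product_strategy[OF assms(3)] by blast
  then show ?thesis
    using memory_structure_Mem card_Mem next_move_memory_next wins_with_memory_next by blast
qed

end
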